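(* Let $X$ be a finite simple graph on vertex set $\{1,\dots,n\}$ and let $\pi\in S_X$. For each $\star\in\{\uparrow,\downarrow,\updownarrow\}$ (increasing, decreasing, mixed), the extended threshold SDS map $\mathbf{F}^\star_\pi$ has no periodic orbit of length $\ge 2$, i.e. all its periodic points are fixed points. For each $\star\in\{\uparrow,\downarrow,\updownarrow\}$, the extended threshold GCA map $\mathbf{F}^\star$ has no periodic orbit of length $\ge 3$, i.e. every periodic orbit has length $1$ or $2$.
   Context: Let $X$ be a finite simple graph with vertices $1,\dots,n$; $d(v)$ denotes the degree of $v$ and $n[v]$ the closed neighborhood of $v$ (including $v$). An extended vertex state is $s_v=(x_v,k_v)\in\{0,1\}\times\{1,2,\dots,d(v)+1\}$; the extended system state is $s=(s_1,\dots,s_n)\in\mathcal{S}=\prod_v(\{0,1\}\times\{1,\dots,d(v)+1\})$. Write $\sigma(x[v])=|\{u\in n[v]: x_u=1\}|$. The vertex function $f_v$ maps $s_v$ to $(x_v',k_v')$ where $x_v'=1$ if $\sigma(x[v])\ge k_v$ and $x_v'=0$ otherwise, and $k_v'$ is given by: increasing ($\uparrow$): $k_v'=k_v+1$ if $x_v=0$ and $\sigma(x[v])\ge k_v$, else $k_v'=k_v$; decreasing ($\downarrow$): $k_v'=k_v-1$ if $x_v=1$ and $\sigma(x[v])<k_v$, else $k_v'=k_v$; mixed ($\updownarrow$): $k_v'=k_v+1$ if $x_v=0$ and $\sigma(x[v])\ge k_v$, $k_v'=k_v-1$ if $x_v=1$ and $\sigma(x[v])<k_v$, else $k_v'=k_v$.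 The local map $F_v:\mathcal{S}\to\mathcal{S}$ replaces $s_v$ by $f_v$ applied to the current states of $n[v]$ and leaves other coordinates unchanged. For a permutation $\pi=(\pi_1,\dots,\pi_n)$ of the vertices, the sequential (SDS) map is $\mathbf{F}_\pi=F_{\pi_n}\circ\cdots\circ F_{\pi_1}$; the parallel (GCA) map $\mathbf{F}$ updates all vertices simultaneously, $\mathbf{F}(s)_v=f_v(s[v])$. A periodic orbit of length $m$ is a cycle of $m$ distinct states in the phase space (the functional graph $s\mapsto\phi(s)$). *)

theory Defs
  imports Main
begin

text \<open>Vertices are the elements of a finite type 'a;
the graph is a symmetric irreflexive relation E. An extended system state assigns to
each vertex v a pair (x_v, k_v) :: bool \<times> nat (x_v = True means state 1).\<close>

datatype mode = Increasing | Decreasing | Mixed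

definition nbhd :: "('a \<Rightarrow> 'a \<Rightarrow> bool) \<Rightarrow> 'a \<Rightarrow> 'a set" where
  "nbhd E v = {u. u = v \<or> E v u}"

definition deg :: "('a \<Rightarrow> 'a \<Rightarrow> bool) \<Rightarrow> 'a \<Rightarrow> nat" where
  "deg E v = card {u. E v u}"

definition sigma :: "('a \<Rightarrow> 'a \<Rightarrow> bool) \<Rightarrow> ('a \<Rightarrow> bool) \<Rightarrow> 'a \<Rightarrow> nat" where
  "sigma E x v = card {u \<in> nbhd E v. x u}"

definition state_space :: "('a \<Rightarrow> 'a \<Rightarrow> bool) \<Rightarrow> ('a \<Rightarrow> bool \<times> nat) set" where
  "state_space E = {s. \<forall>v. 1 \<le> snd (s v) \<and> snd (s v) \<le> deg E v + 1}"

definition vertex_fun :: "mode \<Rightarrow> ('a \<Rightarrow> 'a \<Rightarrow> bool) \<Rightarrow> ('a \<Rightarrow> bool \<times> nat) \<Rightarrow> 'a \<Rightarrow> bool \<times> nat" where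
  "vertex_fun md E s v =
    (let xv = fst (s v); kv = snd (s v); sg = sigma E (\<lambda>u. fst (s u)) v;
         inc = (\<not> xv \<and> kv \<le> sg); dec = (xv \<and> sg < kv);
         k' = (case md of
                 Increasing \<Rightarrow> (if inc then kv + 1 else kv)
               | Decreasing \<Rightarrow> (if dec then kv - 1 else kv)
               | Mixed \<Rightarrow> (if inc then kv + 1 else if dec then kv - 1 else kv))
     in (kv \<le> sg, k'))"

definition local_map :: "mode \<Rightarrow> ('a \<Rightarrow> 'a \<Rightarrow> bool) \<Rightarrow> 'a \<Rightarrow> ('a \<Rightarrow> bool \<times> nat) \<Rightarrow> ('a \<Rightarrow> bool \<times> nat)" where
  "local_map md E v s = s(v := vertex_fun md E s v)"

text \<open>SDS map F_pi = F_{pi_n} o ... o F_{pi_1}: fold applies the head of the list first.\<close>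
definition sds_map :: "mode \<Rightarrow> ('a \<Rightarrow> 'a \<Rightarrow> bool) \<Rightarrow> 'a list \<Rightarrow> ('a \<Rightarrow> bool \<times> nat) \<Rightarrow> ('a \<Rightarrow> bool \<times> nat)" where
  "sds_map md E \<pi> = fold (local_map md E) \<pi>"

definition gca_map :: "mode \<Rightarrow> ('a \<Rightarrow> 'a \<Rightarrow> bool) \<Rightarrow> ('a \<Rightarrow> bool \<times> nat) \<Rightarrow> ('a \<Rightarrow> bool \<times> nat)" where
  "gca_map md E s = (\<lambda>v. vertex_fun md E s v)"

definition periodic_orbit_len :: "('s \<Rightarrow> 's) \<Rightarrow> 's set \<Rightarrow> 's \<Rightarrow> nat \<Rightarrow> bool" where
  "periodic_orbit_len phi S s m \<longleftrightarrow>
     s \<in> S \<and> 1 \<le> m \<and> (phi ^^ m) s = s \<and> (\<forall>j. 0 < j \<and> j < m \<longrightarrow> (phi ^^ j) s \<noteq> s)"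

end

theory Submission
  imports Defs
begin

text \<open>
  Every claim follows from a potential function.  In the increasing (decreasing) mode the quantity
  \<open>2 k\<^sub>v - x\<^sub>v\<close> strictly increases (decreases) whenever vertex \<open>v\<close> changes its state, so the
  sum over all vertices is a strict Lyapunov function for every local map and for the parallel
  map.  In the mixed mode the offset \<open>c\<^sub>v = k\<^sub>v - x\<^sub>v\<close> is invariant and \<open>x\<^sub>v\<close> becomes \<open>1\<close> iff
  \<open>c\<^sub>v\<close> is at most the number of active neighbours: the dynamics is that of an ordinary
  threshold network with thresholds \<open>c\<close>.  Goles' energy
  \<open>e(y, x) = \<Sum>v. (2 c v - 1) (y v + x v) - 2 \<Sum>(v, w) \<in> E. y v x w\<close>
  then decreases strictly along non-trivial sequential updates (evaluated at \<open>y = x\<close>), and along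
  the parallel dynamics when evaluated at two consecutive states, with equality only on orbits
  of period at most two.
\<close>

section \<open>Lyapunov functions and periodic orbits\<close>

definition strict_lyapunov :: "('s \<Rightarrow> int) \<Rightarrow> ('s \<Rightarrow> 's) \<Rightarrow> bool" where
  "strict_lyapunov V f \<longleftrightarrow> (\<forall>s. V (f s) \<le> V s \<and> (V (f s) = V s \<longrightarrow> f s = s))"

definition two_step_lyapunov :: "('s \<Rightarrow> int) \<Rightarrow> ('s \<Rightarrow> 's) \<Rightarrow> bool" where
  "two_step_lyapunov V f \<longleftrightarrow> (\<forall>s. V (f s) \<le> V s \<and> (V (f s) = V s \<longrightarrow> f (f s) = s))"

lemma strict_lyapunov_comp:
  assumes "strict_lyapunov V f" and "strict_lyapunov V g"
  shows "strict_lyapunov V (g \<circ> f)"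
  unfolding strict_lyapunov_def
proof (intro allI)
  fix s
  have "V (f s) \<le> V s" "V (f s) = V s \<longrightarrow> f s = s"
    "V (g (f s)) \<le> V (f s)" "V (g (f s)) = V (f s) \<longrightarrow> g (f s) = f s"
    using assms unfolding strict_lyapunov_def by blast+
  then show "V ((g \<circ> f) s) \<le> V s \<and> (V ((g \<circ> f) s) = V s \<longrightarrow> (g \<circ> f) s = s)"
    by auto
qed

lemma strict_lyapunov_fold:
  assumes "\<And>a. a \<in> set as \<Longrightarrow> strict_lyapunov V (f a)"
  shows "strict_lyapunov V (fold f as)"
  using assms
proof (induction as)
  case Nil
  then show ?case by (simp add: strict_lyapunov_def)
next
  case (Cons a as)
  then have "strict_lyapunov V (fold f as \<circ> f a)" by (intro strict_lyapunov_comp) auto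
  then show ?case by (simp only: fold_Cons)
qed

lemma antitone_potential_funpow:
  assumes "\<And>t. V (f t) \<le> (V t :: int)"
  shows "V ((f ^^ n) s) \<le> V s"
proof (induction n)
  case 0
  show ?case by simp
next
  case (Suc n)
  then show ?case using assms[of "(f ^^ n) s"] by simp
qed

lemma antitone_potential_constant_on_cycle:
  assumes "\<And>t. V (f t) \<le> (V t :: int)" and "(f ^^ m) s = s" and "1 \<le> m"
  shows "V (f s) = V s"
proof -
  obtain n where "m = Suc n" using assms(3) by (cases m) auto
  then have "(f ^^ n) (f s) = s" using assms(2) by (simp add: funpow_swap1)
  moreover have "V ((f ^^ n) (f s)) \<le> V (f s)" by (rule antitone_potential_funpow) (rule assms(1))
  ultimately have "V s \<le> V (f s)" by simp
  then show ?thesis using assms(1)[of s] by simp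
qed

lemma periodic_orbit_len_le_return_time:
  assumes "periodic_orbit_len f S s m" and "(f ^^ j) s = s" and "0 < j"
  shows "m \<le> j"
  using assms unfolding periodic_orbit_len_def by (cases "j < m") auto

lemma periodic_orbit_len_eq_1_if_strict_lyapunov:
  assumes "strict_lyapunov V f" and orbit: "periodic_orbit_len f S s m"
  shows "m = 1"
proof -
  have "V (f s) = V s"
    using assms by (intro antitone_potential_constant_on_cycle[of V f m])
      (auto simp: strict_lyapunov_def periodic_orbit_len_def)
  then have "(f ^^ 1) s = s" using assms(1) by (simp add: strict_lyapunov_def)
  then have "m \<le> 1" by (rule periodic_orbit_len_le_return_time[OF orbit]) simp
  then show ?thesis using orbit by (simp add: periodic_orbit_len_def)
qed

lemma periodic_orbit_len_le_2_if_two_step_lyapunov: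
  assumes "two_step_lyapunov V f" and orbit: "periodic_orbit_len f S s m"
  shows "m \<le> 2"
proof -
  have "V (f s) = V s"
    using assms by (intro antitone_potential_constant_on_cycle[of V f m])
      (auto simp: two_step_lyapunov_def periodic_orbit_len_def)
  then have "(f ^^ 2) s = s" using assms(1) by (simp add: two_step_lyapunov_def numeral_2_eq_2)
  then show "m \<le> 2" by (rule periodic_orbit_len_le_return_time[OF orbit]) simp
qed

section \<open>Increasing and decreasing modes\<close>

lemma strict_lyapunov_sum:
  fixes f :: "('a::finite \<Rightarrow> 'b) \<Rightarrow> 'a \<Rightarrow> 'b" and q :: "'b \<Rightarrow> int"
  assumes le: "\<And>s v. q (f s v) \<le> q (s v)"
    and eq: "\<And>s v. q (f s v) = q (s v) \<Longrightarrow> f s v = s v"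
  shows "strict_lyapunov (\<lambda>s. \<Sum>v\<in>UNIV. q (s v)) f"
  unfolding strict_lyapunov_def
proof (intro allI conjI impI)
  fix s
  show "(\<Sum>v\<in>UNIV. q (f s v)) \<le> (\<Sum>v\<in>UNIV. q (s v))" by (intro sum_mono le)
  assume "(\<Sum>v\<in>UNIV. q (f s v)) = (\<Sum>v\<in>UNIV. q (s v))"
  then have "q (f s v) = q (s v)" for v by (rule sum_mono_inv) (auto intro: le)
  then show "f s = s" by (auto intro: eq)
qed

definition vertex_potential :: "mode \<Rightarrow> bool \<times> nat \<Rightarrow> int" where
  "vertex_potential md p =
     (case md of Increasing \<Rightarrow> -(2 * int (snd p) - (if fst p then 1 else 0))
               | _ \<Rightarrow> 2 * int (snd p) - (if fst p then 1 else 0))"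

lemma vertex_potential_vertex_fun:
  assumes "md \<noteq> Mixed"
  shows "vertex_potential md (vertex_fun md E s v) \<le> vertex_potential md (s v) \<and>
    (vertex_potential md (vertex_fun md E s v) = vertex_potential md (s v)
       \<longrightarrow> vertex_fun md E s v = s v)"
  using assms by (cases md; cases "s v"; auto simp: vertex_potential_def vertex_fun_def Let_def)

lemma strict_lyapunov_local_map_if_not_Mixed:
  fixes E :: "'a::finite \<Rightarrow> 'a \<Rightarrow> bool"
  assumes "md \<noteq> Mixed"
  shows "strict_lyapunov (\<lambda>s. \<Sum>u\<in>UNIV. vertex_potential md (s u)) (local_map md E v)"
  by (rule strict_lyapunov_sum)
    (use vertex_potential_vertex_fun[OF assms, of E] in \<open>auto simp: local_map_def\<close>)

lemma strict_lyapunov_gca_map_if_not_Mixed: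
  fixes E :: "'a::finite \<Rightarrow> 'a \<Rightarrow> bool"
  assumes "md \<noteq> Mixed"
  shows "strict_lyapunov (\<lambda>s. \<Sum>u\<in>UNIV. vertex_potential md (s u)) (gca_map md E)"
  by (rule strict_lyapunov_sum)
    (use vertex_potential_vertex_fun[OF assms, of E] in \<open>auto simp: gca_map_def\<close>)

section \<open>Mixed mode\<close>

definition active :: "('a \<Rightarrow> bool \<times> nat) \<Rightarrow> 'a \<Rightarrow> int" where
  "active s u = of_bool (fst (s u))"

definition offset :: "bool \<times> nat \<Rightarrow> int" where
  "offset p = int (snd p) - of_bool (fst p)"

definition nbr_sum :: "('a \<Rightarrow> 'a \<Rightarrow> bool) \<Rightarrow> ('a \<Rightarrow> int) \<Rightarrow> 'a \<Rightarrow> int" where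
  "nbr_sum E x v = (\<Sum>w | E v w. x w)"

lemma prod_eq_iff_fst_offset: "p = q \<longleftrightarrow> fst p = fst q \<and> offset p = offset q"
  by (cases p; cases q) (auto simp: offset_def)

lemma sigma_eq_nbr_sum_active:
  fixes E :: "'a::finite \<Rightarrow> 'a \<Rightarrow> bool"
  assumes "irreflp E"
  shows "int (sigma E (\<lambda>u. fst (s u)) v) = nbr_sum E (active s) v + active s v"
proof -
  have nbhd: "nbhd E v = insert v {w. E v w}" and "v \<notin> {w. E v w}"
    using assms by (auto simp: nbhd_def irreflp_def)
  have "int (sigma E (\<lambda>u. fst (s u)) v) = (\<Sum>u\<in>nbhd E v. active s u)"
    by (simp add: sigma_def active_def Int_def)
  also have "\<dots> = active s v + nbr_sum E (active s) v"
    using \<open>v \<notin> {w. E v w}\<close> by (simp add: nbhd nbr_sum_def)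
  finally show ?thesis by simp
qed

lemma vertex_fun_Mixed:
  fixes E :: "'a::finite \<Rightarrow> 'a \<Rightarrow> bool"
  assumes "irreflp E"
  shows "fst (vertex_fun Mixed E s v) \<longleftrightarrow> offset (s v) \<le> nbr_sum E (active s) v"
    and "offset (vertex_fun Mixed E s v) = offset (s v)"
  using sigma_eq_nbr_sum_active[OF assms, of s v]
  by (cases "s v"; auto simp: vertex_fun_def Let_def offset_def active_def)+

lemma sum_mult_nbr_sum_commute:
  fixes E :: "'a::finite \<Rightarrow> 'a \<Rightarrow> bool"
  assumes "symp E"
  shows "(\<Sum>v\<in>UNIV. y v * nbr_sum E x v) = (\<Sum>v\<in>UNIV. x v * nbr_sum E y v)"
proof -
  have "(\<Sum>v\<in>UNIV. y v * nbr_sum E x v) = (\<Sum>v\<in>UNIV. \<Sum>w\<in>UNIV. if E v w then y v * x w else 0)"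
    by (simp add: nbr_sum_def sum_distrib_left sum.inter_filter[symmetric])
  also have "\<dots> = (\<Sum>w\<in>UNIV. \<Sum>v\<in>UNIV. if E w v then x w * y v else 0)"
    using assms by (subst sum.swap) (auto intro!: sum.cong simp: symp_def mult.commute)
  also have "\<dots> = (\<Sum>v\<in>UNIV. x v * nbr_sum E y v)"
    by (simp add: nbr_sum_def sum_distrib_left sum.inter_filter[symmetric])
  finally show ?thesis .
qed

definition energy :: "('a \<Rightarrow> 'a \<Rightarrow> bool) \<Rightarrow> ('a \<Rightarrow> int) \<Rightarrow> ('a \<Rightarrow> int) \<Rightarrow> ('a \<Rightarrow> int) \<Rightarrow> int" where
  "energy E c y x = (\<Sum>v\<in>UNIV. (2 * c v - 1) * (y v + x v) - 2 * y v * nbr_sum E x v)"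

lemma energy_diff:
  fixes E :: "'a::finite \<Rightarrow> 'a \<Rightarrow> bool"
  assumes "symp E"
  shows "energy E c z y - energy E c y x
           = - (\<Sum>v\<in>UNIV. (z v - x v) * (2 * nbr_sum E y v - 2 * c v + 1))"
proof -
  have "(\<Sum>v\<in>UNIV. 2 * y v * nbr_sum E x v) = (\<Sum>v\<in>UNIV. 2 * x v * nbr_sum E y v)"
    using sum_mult_nbr_sum_commute[OF assms, of y x]
    by (simp add: mult.assoc sum_distrib_left[symmetric])
  then have "energy E c z y - energy E c y x = (\<Sum>v\<in>UNIV.
      ((2 * c v - 1) * (z v + y v) - 2 * z v * nbr_sum E y v)
      - ((2 * c v - 1) * (y v + x v) - 2 * x v * nbr_sum E y v))"
    by (simp only: energy_def sum_subtractf)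
  also have "\<dots> = - (\<Sum>v\<in>UNIV. (z v - x v) * (2 * nbr_sum E y v - 2 * c v + 1))"
    unfolding sum_negf[symmetric] by (rule sum.cong) (simp_all add: algebra_simps)
  finally show ?thesis .
qed

lemma threshold_gain_nonneg:
  fixes c N :: int
  shows "0 \<le> (of_bool (c \<le> N) - of_bool b) * (2 * N - 2 * c + 1)"
  by (cases b; cases "c \<le> N") auto

lemma threshold_gain_eq_0_iff:
  fixes c N :: int
  shows "(of_bool (c \<le> N) - of_bool b) * (2 * N - 2 * c + 1) = 0 \<longleftrightarrow> b = (c \<le> N)"
proof -
  have "2 * N - 2 * c + 1 \<noteq> 0" by presburger
  then show ?thesis by (cases b; cases "c \<le> N") auto
qed

lemma sum_diff_mult_eq_single:
  fixes x y :: "'a::finite \<Rightarrow> 'b::comm_ring"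
  assumes "\<And>u. u \<noteq> v \<Longrightarrow> y u = x u"
  shows "(\<Sum>u\<in>UNIV. (y u - x u) * g u) = (y v - x v) * g v"
proof -
  have "(\<Sum>u\<in>UNIV. (y u - x u) * g u) = (\<Sum>u\<in>UNIV. if u = v then (y v - x v) * g v else 0)"
    by (rule sum.cong) (auto simp: assms)
  then show ?thesis by simp
qed

lemma nbr_sum_cong_irreflp:
  assumes "irreflp E" and "\<And>u. u \<noteq> v \<Longrightarrow> y u = x u"
  shows "nbr_sum E y v = nbr_sum E x v"
proof -
  have "y w = x w" if "E v w" for w
    using assms that by (cases "w = v") (auto simp: irreflp_def)
  then show ?thesis unfolding nbr_sum_def by (intro sum.cong) auto
qed

definition seq_energy :: "('a \<Rightarrow> 'a \<Rightarrow> bool) \<Rightarrow> ('a \<Rightarrow> bool \<times> nat) \<Rightarrow> int" where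
  "seq_energy E s = energy E (\<lambda>u. offset (s u)) (active s) (active s)"

lemma strict_lyapunov_local_map_Mixed:
  fixes E :: "'a::finite \<Rightarrow> 'a \<Rightarrow> bool"
  assumes "symp E" and "irreflp E"
  shows "strict_lyapunov (seq_energy E) (local_map Mixed E v)"
  unfolding strict_lyapunov_def
proof (intro allI)
  fix s
  define s' where "s' = local_map Mixed E v s"
  define c where "c = (\<lambda>u. offset (s u))"
  define N where "N = nbr_sum E (active s) v"
  define gain where "gain = (of_bool (c v \<le> N) - of_bool (fst (s v))) * (2 * N - 2 * c v + 1)"
  have unmoved: "u \<noteq> v \<Longrightarrow> s' u = s u" for u by (simp add: s'_def local_map_def)
  then have active_unmoved: "u \<noteq> v \<Longrightarrow> active s' u = active s u" for u
    by (simp add: active_def)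
  have offset_s': "(\<lambda>u. offset (s' u)) = c"
    by (auto simp: c_def s'_def local_map_def vertex_fun_Mixed(2)[OF assms(2)])
  have fst_s'_v: "fst (s' v) \<longleftrightarrow> c v \<le> N"
    by (simp add: s'_def local_map_def c_def N_def vertex_fun_Mixed(1)[OF assms(2)])
  have N_s': "nbr_sum E (active s') v = N"
    unfolding N_def using assms(2) active_unmoved by (rule nbr_sum_cong_irreflp)
  have collapse: "(\<Sum>u\<in>UNIV. (active s' u - active s u) * g u) = (active s' v - active s v) * g v"
    for g by (rule sum_diff_mult_eq_single) (rule active_unmoved)
  have "seq_energy E s' - seq_energy E s
      = (energy E c (active s') (active s') - energy E c (active s') (active s))
        + (energy E c (active s') (active s) - energy E c (active s) (active s))"
    by (simp add: seq_energy_def offset_s' flip: c_def)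
  also have "\<dots> = - 2 * gain"
    unfolding energy_diff[OF assms(1)] collapse
    by (simp add: N_s' fst_s'_v gain_def active_def flip: N_def)
  finally have diff: "seq_energy E s' - seq_energy E s = - 2 * gain" .
  have "0 \<le> gain" unfolding gain_def by (rule threshold_gain_nonneg)
  moreover have "s' = s" if "gain = 0"
  proof -
    have "fst (s' v) = fst (s v)"
      using that fst_s'_v threshold_gain_eq_0_iff unfolding gain_def by simp
    then have "s' v = s v"
      using offset_s' by (simp add: prod_eq_iff_fst_offset c_def fun_eq_iff)
    then show ?thesis unfolding fun_eq_iff by (metis unmoved)
  qed
  ultimately show "seq_energy E (local_map Mixed E v s) \<le> seq_energy E s \<and>
      (seq_energy E (local_map Mixed E v s) = seq_energy E s \<longrightarrow> local_map Mixed E v s = s)"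
    using diff unfolding s'_def by auto
qed

definition par_energy :: "('a \<Rightarrow> 'a \<Rightarrow> bool) \<Rightarrow> ('a::finite \<Rightarrow> bool \<times> nat) \<Rightarrow> int" where
  "par_energy E s = energy E (\<lambda>u. offset (s u)) (active (gca_map Mixed E s)) (active s)"

lemma two_step_lyapunov_gca_map_Mixed:
  fixes E :: "'a::finite \<Rightarrow> 'a \<Rightarrow> bool"
  assumes "symp E" and "irreflp E"
  shows "two_step_lyapunov (par_energy E) (gca_map Mixed E)"
  unfolding two_step_lyapunov_def
proof (intro allI)
  fix s :: "'a \<Rightarrow> bool \<times> nat"
  let ?F = "gca_map Mixed E"
  define c where "c = (\<lambda>u. offset (s u))"
  define y where "y = active (?F s)"
  define gain where
    "gain u = (of_bool (c u \<le> nbr_sum E y u) - of_bool (fst (s u))) * (2 * nbr_sum E y u - 2 * c u + 1)"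
    for u
  have offset_F: "(\<lambda>u. offset (?F t u)) = (\<lambda>u. offset (t u))" for t
    by (simp add: gca_map_def vertex_fun_Mixed(2)[OF assms(2)])
  have fst_FF: "fst (?F (?F s) u) \<longleftrightarrow> c u \<le> nbr_sum E y u" for u
    using fun_cong[OF offset_F[of s], of u]
    by (simp add: gca_map_def vertex_fun_Mixed(1)[OF assms(2)] c_def y_def)
  have diff: "par_energy E (?F s) - par_energy E s = - (\<Sum>u\<in>UNIV. gain u)"
    unfolding par_energy_def offset_F energy_diff[OF assms(1)]
    by (simp add: gain_def active_def fst_FF c_def flip: y_def)
  have gain_nonneg: "0 \<le> gain u" for u
    unfolding gain_def by (rule threshold_gain_nonneg)
  moreover have "?F (?F s) = s" if "(\<Sum>u\<in>UNIV. gain u) = 0"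
  proof (rule ext)
    fix u
    have "gain u = 0" using that gain_nonneg by (simp add: sum_nonneg_eq_0_iff)
    then have "fst (?F (?F s) u) = fst (s u)"
      using fst_FF threshold_gain_eq_0_iff unfolding gain_def by simp
    then show "?F (?F s) u = s u"
      using offset_F by (simp add: prod_eq_iff_fst_offset fun_eq_iff)
  qed
  ultimately show "par_energy E (?F s) \<le> par_energy E s \<and>
      (par_energy E (?F s) = par_energy E s \<longrightarrow> ?F (?F s) = s)"
    using diff sum_nonneg[of UNIV gain] by auto
qed

theorem theorem3p1:
  fixes E :: "'a::finite \<Rightarrow> 'a \<Rightarrow> bool" and \<pi> :: "'a list" and md :: mode
  assumes "symp E" and "irreflp E"
    and "distinct \<pi>" and "set \<pi> = UNIV"
  shows "(\<forall>s m. periodic_orbit_len (sds_map md E \<pi>) (state_space E) s m \<longrightarrow> m = 1)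
       \<and> (\<forall>s m. periodic_orbit_len (gca_map md E) (state_space E) s m \<longrightarrow> m \<le> 2)"
proof (cases "md = Mixed")
  case True
  have sds: "strict_lyapunov (seq_energy E) (sds_map md E \<pi>)"
    unfolding sds_map_def True
    by (intro strict_lyapunov_fold strict_lyapunov_local_map_Mixed assms(1,2))
  have gca: "two_step_lyapunov (par_energy E) (gca_map md E)"
    unfolding True by (rule two_step_lyapunov_gca_map_Mixed[OF assms(1,2)])
  show ?thesis
    using periodic_orbit_len_eq_1_if_strict_lyapunov[OF sds]
      periodic_orbit_len_le_2_if_two_step_lyapunov[OF gca] by blast
next
  case False
  let ?V = "\<lambda>s. \<Sum>u\<in>UNIV. vertex_potential md (s u)"
  have sds: "strict_lyapunov ?V (sds_map md E \<pi>)"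
    unfolding sds_map_def
    by (intro strict_lyapunov_fold strict_lyapunov_local_map_if_not_Mixed False)
  have gca: "strict_lyapunov ?V (gca_map md E)"
    by (rule strict_lyapunov_gca_map_if_not_Mixed[OF False])
  show ?thesis
    using periodic_orbit_len_eq_1_if_strict_lyapunov[OF sds]
      periodic_orbit_len_eq_1_if_strict_lyapunov[OF gca] by fastforce
qed

end
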